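(* Consider the autonomous system in the context, let $\bar\theta^0=(\bar F^0,\mu^0,o^0)\in\Theta$ be any initial condition, and let $o(t)=o(t;\bar\theta^0)$ be the $o$-component of its solution. Then the state $(\bar F,\mu)=(0,\mu^* )$ is a globally asymptotically stable equilibrium of the time-dependent system $$\dot{\bar F}_k=\frac1K\sum_{j}\frac{e^{\bar F_j}}{\sum_\ell\pi_\ell(\bar\theta)e^{\bar F_\ell}}-\frac{e^{\bar F_k}}{\sum_\ell\pi_\ell(\bar\theta)e^{\bar F_\ell}},\qquad \dot\mu_{km}=\frac{e^{\bar F_k}}{\sum_\ell\pi_\ell(\bar\theta)e^{\bar F_\ell}}(\mu^*_{km}-\mu_{km}),$$ where $\bar\theta=(\bar F,\mu,o(t))$, uniformly in the trajectory $o(t)$ (the time $T(\rho,\eta)$ in the definition of global asymptotic stability can be chosen independently of $o(\cdot)$).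
   Context: $K\ge2$, $M\ge1$, $\varepsilon>0$, $\mathcal{P}^\varepsilon(K)$ is the set of probability vectors on $[K]$ with entries $\ge\varepsilon$, and $O^\varepsilon=\{o\in\mathbb{R}^K_{\ge0}:\sum_ko_k\le\varepsilon^{-1}\}$. $\Theta=\mathbb{R}^K\times\mathbb{R}^{KM}\times O^\varepsilon$; $\pi:\Theta\to\mathcal P^\varepsilon(K)$ and $\gamma:\mathbb{R}^{KM}\to\mathcal P^\varepsilon(K)$ are continuously differentiable, and $\mu^*\in\mathbb{R}^{KM}$ is fixed. The autonomous system $\dot{\bar\theta}=\bar g(\bar\theta)$ is given by the two equations displayed in the claim (with $\bar\theta=(\bar F,\mu,o)$) together with $\dot o_k=\dfrac{\pi_k(\bar\theta)}{\gamma_k(\mu)}\dfrac{e^{\bar F_k}}{\sum_\ell\pi_\ell(\bar\theta)e^{\bar F_\ell}}-o_k$. Here $\bar F$ ranges over the hyperplane $\{\sum_k\bar F_k=0\}$ (representing free energies modulo additive constants, shifted so that the exact free energy is $0$), with norm $\|\bar F\|_{\mathbb L}=\|\bar F\|$; distances in $(\bar F,\mu)$ are $\|\bar F\|+\|\mu-\mu^*\|$. Global asymptotic stability of $z^*$ for $\dot z=h(z,t)$: (1) for each $\eta>0$ there is $\delta>0$ independent of $t_0$ with $|z_0-z^*|<\delta\Rightarrow|z(t;z_0,t_0)-z^*|<\eta$ for all $t\ge t_0\ge0$; (2) for all $\eta,\rho>0$ there is $T(\rho,\eta)<\infty$ independent of $t_0$ with $|z(t;z_0,t_0)-z^*|<\eta$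 for all $t\ge t_0+T$ whenever $|z_0-z^*|<\rho$. *)

theory Defs
  imports "HOL-Analysis.Analysis"
begin

text \<open>Indices: k ranges over the finite type 'k (so K = CARD('k)), m over 'm (M = CARD('m)).
  Free energies F :: real^'k, means mu :: real^'m^'k (an element of R^(KM)), o :: real^'k.\<close>

definition Peps :: "real \<Rightarrow> (real^'k) set" where
  "Peps \<epsilon> = {p. (\<forall>k. p $ k \<ge> \<epsilon>) \<and> (\<Sum>k\<in>UNIV. p $ k) = 1}"

definition Oeps :: "real \<Rightarrow> (real^'k) set" where
  "Oeps \<epsilon> = {ov. (\<forall>k. ov $ k \<ge> 0) \<and> (\<Sum>k\<in>UNIV. ov $ k) \<le> 1 / \<epsilon>}"

definition Theta :: "real \<Rightarrow> ((real^'k) \<times> (real^'m^'k) \<times> (real^'k)) set" where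
  "Theta \<epsilon> = UNIV \<times> UNIV \<times> Oeps \<epsilon>"

definition Hyp :: "(real^'k) set" where
  "Hyp = {F. (\<Sum>k\<in>UNIV. F $ k) = 0}"

definition C1_on :: "'a::real_normed_vector set \<Rightarrow> ('a \<Rightarrow> 'b::real_normed_vector) \<Rightarrow> bool" where
  "C1_on S f \<longleftrightarrow> (\<exists>f'. continuous_on S f' \<and>
      (\<forall>x\<in>S. (f has_derivative blinfun_apply (f' x)) (at x within S)))"

definition wgt :: "((real^'k) \<times> (real^'m^'k) \<times> (real^'k) \<Rightarrow> real^'k) \<Rightarrow>
    real^'k \<Rightarrow> real^'m^'k \<Rightarrow> real^'k \<Rightarrow> 'k \<Rightarrow> real" where
  "wgt \<pi> F \<mu> ov k = exp (F $ k) / (\<Sum>l\<in>UNIV. \<pi> (F, \<mu>, ov) $ l * exp (F $ l))"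

definition Fdot :: "((real^'k) \<times> (real^'m^'k) \<times> (real^'k) \<Rightarrow> real^'k) \<Rightarrow>
    real^'k \<Rightarrow> real^'m^'k \<Rightarrow> real^'k \<Rightarrow> real^'k" where
  "Fdot \<pi> F \<mu> ov = (\<chi> k. (1 / real CARD('k)) * (\<Sum>j\<in>UNIV. wgt \<pi> F \<mu> ov j) - wgt \<pi> F \<mu> ov k)"

definition mudot :: "((real^'k) \<times> (real^'m^'k) \<times> (real^'k) \<Rightarrow> real^'k) \<Rightarrow> real^'m^'k \<Rightarrow>
    real^'k \<Rightarrow> real^'m^'k \<Rightarrow> real^'k \<Rightarrow> real^'m^'k" where
  "mudot \<pi> \<mu>s F \<mu> ov = (\<chi> k. \<chi> m. wgt \<pi> F \<mu> ov k * (\<mu>s $ k $ m - \<mu> $ k $ m))"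

definition odot :: "((real^'k) \<times> (real^'m^'k) \<times> (real^'k) \<Rightarrow> real^'k) \<Rightarrow> (real^'m^'k \<Rightarrow> real^'k) \<Rightarrow>
    real^'k \<Rightarrow> real^'m^'k \<Rightarrow> real^'k \<Rightarrow> real^'k" where
  "odot \<pi> \<gamma> F \<mu> ov = (\<chi> k. \<pi> (F, \<mu>, ov) $ k / \<gamma> \<mu> $ k * wgt \<pi> F \<mu> ov k - ov $ k)"

definition auton_sol where
  "auton_sol \<epsilon> \<pi> \<gamma> \<mu>s th0 th \<longleftrightarrow> th 0 = th0 \<and>
     (\<forall>t\<ge>0. th t \<in> Theta \<epsilon> \<and>
        (th has_vector_derivative
           (case th t of (F, \<mu>, ov) \<Rightarrow> (Fdot \<pi> F \<mu> ov, mudot \<pi> \<mu>s F \<mu> ov, odot \<pi> \<gamma> F \<mu> ov)))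
        (at t within {0..}))"

definition nonauton_sol where
  "nonauton_sol \<pi> \<mu>s (ot :: real \<Rightarrow> real^'k) t0 z0 z \<longleftrightarrow> z t0 = z0 \<and>
     (\<forall>t\<ge>t0. (z has_vector_derivative
           (case z t of (F, \<mu>) \<Rightarrow> (Fdot \<pi> F \<mu> (ot t), mudot \<pi> \<mu>s F \<mu> (ot t))))
        (at t within {t0..}))"

definition zdist :: "real^'m^'k \<Rightarrow> (real^'k) \<times> (real^'m^'k) \<Rightarrow> real" where
  "zdist \<mu>s z = norm (fst z) + norm (snd z - \<mu>s)"

end

theory Submission
  imports Defs
begin

text \<open>The sum of the free energies is conserved, so \<open>F\<close> stays on the hyperplane, where
  \<open>F \<bullet> F' = - (\<Sum>k. F\<^sub>k (exp F\<^sub>k - 1)) / (\<Sum>l. \<pi>\<^sub>l exp F\<^sub>l) \<le> 0\<close>. Hence \<open>\<parallel>F\<parallel>\<close> never exceeds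
  \<open>r = \<parallel>F(t\<^sub>0)\<parallel>\<close>, so every weight \<open>exp F\<^sub>k / (\<Sum>l. \<pi>\<^sub>l exp F\<^sub>l)\<close> is at least \<open>c = exp (-2r)\<close>,
  and then \<open>\<parallel>F\<parallel>\<^sup>2\<close> and \<open>\<parallel>\<mu> - \<mu>*\<parallel>\<^sup>2\<close> are Lyapunov functions decaying like \<open>exp (-2ct)\<close>.
  Only the fact that \<open>\<pi>\<close> is a probability vector enters, so the rate is uniform in \<open>o(t)\<close>.\<close>

lemma deriv_le_neg_mult_imp_exp_decay:
  fixes f f' :: "real \<Rightarrow> real"
  assumes deriv: "\<And>s. a \<le> s \<Longrightarrow> (f has_real_derivative f' s) (at s within {a..})"
    and deriv_le: "\<And>s. a \<le> s \<Longrightarrow> f' s \<le> - c * f s"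
    and "a \<le> t"
  shows "f t \<le> f a * exp (- c * (t - a))"
proof -
  define g where "g s = - (f s * exp (c * (s - a)))" for s
  have dg: "(g has_real_derivative - ((f' s + c * f s) * exp (c * (s - a)))) (at s within {a..})"
    if "a \<le> s" for s
    unfolding g_def
    by (rule derivative_eq_intros deriv[OF that] refl | simp add: algebra_simps)+
  have "g a \<le> g t"
  proof (rule DERIV_nonneg_imp_increasing_open[OF \<open>a \<le> t\<close>])
    fix x assume x: "a < x" "x < t"
    have "at x within {a..} = at x"
      by (rule at_within_interior) (use x in auto)
    then have "(g has_real_derivative - ((f' x + c * f x) * exp (c * (x - a)))) (at x)"
      using dg[of x] x by simp
    moreover have "0 \<le> - ((f' x + c * f x) * exp (c * (x - a)))"
      using deriv_le[of x] x by (simp add: mult_le_0_iff)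
    ultimately show "\<exists>y. DERIV g x :> y \<and> 0 \<le> y" by blast
  next
    show "continuous_on {a..t} g"
      unfolding continuous_on_eq_continuous_within
    proof
      fix x assume "x \<in> {a..t}"
      then have "continuous (at x within {a..}) g"
        by (intro DERIV_continuous[OF dg]) auto
      then show "continuous (at x within {a..t}) g"
        by (rule continuous_within_subset) auto
    qed
  qed
  then have "f t * exp (c * (t - a)) * exp (- c * (t - a)) \<le> f a * exp (- c * (t - a))"
    by (simp add: g_def mult_right_mono)
  then show ?thesis by (simp add: mult.assoc flip: exp_add)
qed

lemma norm_exp_decay_of_inner_deriv_le:
  fixes x x' :: "real \<Rightarrow> 'a::real_inner"
  assumes deriv: "\<And>s. a \<le> s \<Longrightarrow> (x has_vector_derivative x' s) (at s within {a..})"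
    and inner_le: "\<And>s. a \<le> s \<Longrightarrow> x s \<bullet> x' s \<le> - c * (norm (x s))\<^sup>2"
    and "a \<le> t"
  shows "norm (x t) \<le> norm (x a) * exp (- c * (t - a))"
proof -
  have "((\<lambda>s. (norm (x s))\<^sup>2) has_real_derivative 2 * (x s \<bullet> x' s)) (at s within {a..})"
    if "a \<le> s" for s
  proof -
    have "((\<lambda>s. x s \<bullet> x s) has_vector_derivative x s \<bullet> x' s + x' s \<bullet> x s) (at s within {a..})"
      using bounded_bilinear.has_vector_derivative[OF bounded_bilinear_inner deriv[OF that] deriv[OF that]] .
    then show ?thesis
      by (simp add: power2_norm_eq_inner has_real_derivative_iff_has_vector_derivative inner_commute)
  qed
  then have "(norm (x t))\<^sup>2 \<le> (norm (x a))\<^sup>2 * exp (- (2 * c) * (t - a))"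
    by (rule deriv_le_neg_mult_imp_exp_decay) (use inner_le \<open>a \<le> t\<close> in auto)
  also have "\<dots> = (norm (x a) * exp (- c * (t - a)))\<^sup>2"
    by (simp add: power_mult_distrib power2_eq_square flip: exp_add)
  finally show ?thesis by (rule power2_le_imp_le) simp
qed

lemma sq_le_mult_exp_minus_one:
  fixes x r :: real
  assumes "\<bar>x\<bar> \<le> r"
  shows "exp (- r) * x\<^sup>2 \<le> x * (exp x - 1)"
proof (cases "0 \<le> x")
  case True
  have "exp (- r) * x\<^sup>2 \<le> x * x"
    using assms True by (simp add: power2_eq_square mult_left_le_one_le)
  also have "\<dots> \<le> x * (exp x - 1)"
    by (rule mult_left_mono) (use True exp_ge_add_one_self[of x] in linarith)+
  finally show ?thesis .
next
  case False
  have "(- x) * exp x \<le> (exp (- x) - 1) * exp x"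
    using exp_ge_add_one_self[of "- x"] by (intro mult_right_mono) auto
  also have "\<dots> = 1 - exp x" by (simp add: algebra_simps flip: exp_add)
  finally have neg: "(- x) * exp x \<le> 1 - exp x" .
  have "exp (- r) * x\<^sup>2 \<le> exp x * x\<^sup>2"
    using assms False by (intro mult_right_mono) auto
  also have "\<dots> = (- x) * ((- x) * exp x)" by (simp add: power2_eq_square)
  also have "\<dots> \<le> (- x) * (1 - exp x)"
    using neg False by (intro mult_left_mono) auto
  also have "\<dots> = x * (exp x - 1)" by (simp add: algebra_simps)
  finally show ?thesis .
qed

lemma Peps_subset_Peps_0: "0 \<le> \<epsilon> \<Longrightarrow> Peps \<epsilon> \<subseteq> Peps 0"
  by (auto simp: Peps_def intro: order_trans)

lemma norm_square_vec_eq_sum: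
  fixes x :: "'a::real_inner^'n"
  shows "(norm x)\<^sup>2 = (\<Sum>k\<in>UNIV. (norm (x $ k))\<^sup>2)"
  by (simp add: power2_norm_eq_inner inner_vec_def)

lemma exp_mixture_bounds:
  fixes p F :: "real^'k"
  assumes "p \<in> Peps 0"
  shows "exp (- norm F) \<le> (\<Sum>l\<in>UNIV. p $ l * exp (F $ l))"
    and "(\<Sum>l\<in>UNIV. p $ l * exp (F $ l)) \<le> exp (norm F)"
proof -
  have p: "\<And>l. 0 \<le> p $ l" "(\<Sum>l\<in>UNIV. p $ l) = 1"
    using assms by (auto simp: Peps_def)
  have F: "- norm F \<le> F $ l" "F $ l \<le> norm F" for l
    using component_le_norm_cart[of F l] by linarith+
  have "exp (- norm F) = (\<Sum>l\<in>UNIV. p $ l * exp (- norm F))"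
    by (simp flip: sum_distrib_right add: p)
  also have "\<dots> \<le> (\<Sum>l\<in>UNIV. p $ l * exp (F $ l))"
    by (intro sum_mono mult_left_mono p) (simp add: F)
  finally show "exp (- norm F) \<le> (\<Sum>l\<in>UNIV. p $ l * exp (F $ l))" .
  have "(\<Sum>l\<in>UNIV. p $ l * exp (F $ l)) \<le> (\<Sum>l\<in>UNIV. p $ l * exp (norm F))"
    by (intro sum_mono mult_left_mono p) (simp add: F)
  also have "\<dots> = exp (norm F)"
    by (simp flip: sum_distrib_right add: p)
  finally show "(\<Sum>l\<in>UNIV. p $ l * exp (F $ l)) \<le> exp (norm F)" .
qed

lemma wgt_ge:
  assumes "\<pi> (F, \<mu>, ov) \<in> Peps 0"
  shows "exp (- 2 * norm F) \<le> wgt \<pi> F \<mu> ov k"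
proof -
  define S where "S = (\<Sum>l\<in>UNIV. \<pi> (F, \<mu>, ov) $ l * exp (F $ l))"
  have "0 < S"
    unfolding S_def using exp_mixture_bounds(1)[OF assms, of F] by (rule less_le_trans[OF exp_gt_zero])
  have "exp (- 2 * norm F) = exp (- norm F) / exp (norm F)"
    by (simp flip: exp_diff)
  also have "\<dots> \<le> exp (F $ k) / exp (norm F)"
    using component_le_norm_cart[of F k] by (simp add: divide_right_mono abs_le_iff)
  also have "\<dots> \<le> exp (F $ k) / S"
    using \<open>0 < S\<close> exp_mixture_bounds(2)[OF assms, of F] by (simp add: S_def divide_left_mono)
  also have "\<dots> = wgt \<pi> F \<mu> ov k"
    by (simp add: S_def wgt_def)
  finally show ?thesis .
qed

lemma sum_Fdot_eq_0: "(\<Sum>k\<in>UNIV. Fdot \<pi> F \<mu> ov $ k) = 0"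
  by (simp add: Fdot_def sum_subtractf)

lemma inner_Fdot_le:
  fixes F :: "real^'k"
  assumes "\<pi> (F, \<mu>, ov) \<in> Peps 0" and "F \<in> Hyp"
  shows "F \<bullet> Fdot \<pi> F \<mu> ov \<le> - exp (- 2 * norm F) * (norm F)\<^sup>2"
proof -
  define S where "S = (\<Sum>l\<in>UNIV. \<pi> (F, \<mu>, ov) $ l * exp (F $ l))"
  define X where "X = (\<Sum>k\<in>UNIV. F $ k * (exp (F $ k) - 1))"
  have S_bounds: "exp (- norm F) \<le> S" "S \<le> exp (norm F)"
    unfolding S_def using exp_mixture_bounds[OF assms(1)] by auto
  have sum0: "(\<Sum>k\<in>UNIV. F $ k) = 0"
    using assms(2) by (simp add: Hyp_def)
  define A where "A = 1 / real CARD('k) * (\<Sum>j\<in>UNIV. wgt \<pi> F \<mu> ov j)"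
  have "F \<bullet> Fdot \<pi> F \<mu> ov = (\<Sum>k\<in>UNIV. F $ k * (A - wgt \<pi> F \<mu> ov k))"
    by (simp add: inner_vec_def Fdot_def A_def)
  also have "\<dots> = (\<Sum>k\<in>UNIV. F $ k) * A - (\<Sum>k\<in>UNIV. F $ k * wgt \<pi> F \<mu> ov k)"
    by (simp add: right_diff_distrib sum_subtractf sum_distrib_right)
  also have "\<dots> = - (\<Sum>k\<in>UNIV. F $ k * exp (F $ k)) / S"
    by (simp add: sum0 wgt_def S_def sum_divide_distrib)
  also have "(\<Sum>k\<in>UNIV. F $ k * exp (F $ k)) = X"
    by (simp add: X_def right_diff_distrib sum_subtractf sum0)
  finally have inner_eq: "F \<bullet> Fdot \<pi> F \<mu> ov = - X / S" .
  have "exp (- norm F) * (F $ k)\<^sup>2 \<le> F $ k * (exp (F $ k) - 1)" for k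
    by (rule sq_le_mult_exp_minus_one) (rule component_le_norm_cart)
  then have X_ge: "exp (- norm F) * (norm F)\<^sup>2 \<le> X"
    unfolding X_def norm_square_vec_eq_sum sum_distrib_left by (simp add: sum_mono)
  have "exp (- 2 * norm F) = exp (- norm F) / exp (norm F)"
    by (simp flip: exp_diff)
  then have "exp (- 2 * norm F) * (norm F)\<^sup>2 = exp (- norm F) * (norm F)\<^sup>2 / exp (norm F)"
    by simp
  also have "\<dots> \<le> X / exp (norm F)"
    using X_ge by (rule divide_right_mono) simp
  also have "\<dots> \<le> X / S"
  proof (rule divide_left_mono)
    show "0 \<le> X" using X_ge by (rule order_trans[rotated]) simp
    show "0 < exp (norm F) * S" using S_bounds(1) by (simp add: less_le_trans[OF exp_gt_zero])
  qed (fact S_bounds(2))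
  finally show ?thesis by (simp add: inner_eq)
qed

lemma inner_mudot_le:
  assumes "\<pi> (F, \<mu>, ov) \<in> Peps 0"
  shows "(\<mu> - \<mu>s) \<bullet> mudot \<pi> \<mu>s F \<mu> ov \<le> - exp (- 2 * norm F) * (norm (\<mu> - \<mu>s))\<^sup>2"
proof -
  have row: "mudot \<pi> \<mu>s F \<mu> ov $ k = - (wgt \<pi> F \<mu> ov k *\<^sub>R (\<mu> - \<mu>s) $ k)" for k
    by (simp add: mudot_def vec_eq_iff algebra_simps)
  have "(\<mu> - \<mu>s) \<bullet> mudot \<pi> \<mu>s F \<mu> ov = - (\<Sum>k\<in>UNIV. wgt \<pi> F \<mu> ov k * (norm ((\<mu> - \<mu>s) $ k))\<^sup>2)"
    by (simp add: inner_vec_def row power2_norm_eq_inner sum_negf sum_distrib_left mult_ac)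
  also have "\<dots> \<le> - (\<Sum>k\<in>UNIV. exp (- 2 * norm F) * (norm ((\<mu> - \<mu>s) $ k))\<^sup>2)"
    using wgt_ge[where \<pi> = \<pi> and F = F and \<mu> = \<mu> and ov = ov, OF assms] by (simp add: sum_mono mult_right_mono)
  also have "\<dots> = - exp (- 2 * norm F) * (norm (\<mu> - \<mu>s))\<^sup>2"
    unfolding norm_square_vec_eq_sum[of "\<mu> - \<mu>s"] by (simp flip: sum_distrib_left)
  finally show ?thesis .
qed

lemma nonauton_sol_has_vector_derivative:
  fixes ot :: "real \<Rightarrow> real^'k" and \<mu>s :: "real^'m^'k"
  assumes "nonauton_sol \<pi> \<mu>s ot t0 z0 z" and "t0 \<le> s"
  shows "((\<lambda>s. fst (z s)) has_vector_derivative Fdot \<pi> (fst (z s)) (snd (z s)) (ot s)) (at s within {t0..})"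
    and "((\<lambda>s. snd (z s) - \<mu>s) has_vector_derivative mudot \<pi> \<mu>s (fst (z s)) (snd (z s)) (ot s))
      (at s within {t0..})"
proof -
  have dz: "(z has_vector_derivative (Fdot \<pi> (fst (z s)) (snd (z s)) (ot s), mudot \<pi> \<mu>s (fst (z s)) (snd (z s)) (ot s)))
      (at s within {t0..})"
    using assms by (simp add: nonauton_sol_def case_prod_beta)
  show "((\<lambda>s. fst (z s)) has_vector_derivative Fdot \<pi> (fst (z s)) (snd (z s)) (ot s)) (at s within {t0..})"
    using bounded_linear.has_vector_derivative[OF bounded_linear_fst dz] by simp
  show "((\<lambda>s. snd (z s) - \<mu>s) has_vector_derivative mudot \<pi> \<mu>s (fst (z s)) (snd (z s)) (ot s))
      (at s within {t0..})"
    using bounded_linear.has_vector_derivative[OF bounded_linear_snd dz]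
    by (simp add: has_vector_derivative_diff_const)
qed

lemma nonauton_sol_in_Hyp:
  fixes ot :: "real \<Rightarrow> real^'k" and \<mu>s :: "real^'m^'k"
  assumes sol: "nonauton_sol \<pi> \<mu>s ot t0 z0 z" and "fst z0 \<in> Hyp" and "t0 \<le> s"
  shows "fst (z s) \<in> Hyp"
proof -
  have "((\<lambda>s. \<Sum>k\<in>UNIV. fst (z s) $ k) has_vector_derivative 0) (at u within {t0..})"
    if "t0 \<le> u" for u
  proof -
    note dF = nonauton_sol_has_vector_derivative(1)[OF sol that]
    have "((\<lambda>s. \<Sum>k\<in>UNIV. fst (z s) $ k) has_vector_derivative
        (\<Sum>k\<in>UNIV. Fdot \<pi> (fst (z u)) (snd (z u)) (ot u) $ k)) (at u within {t0..})"
      by (intro has_vector_derivative_sum bounded_linear.has_vector_derivative[OF bounded_linear_vec_nth dF])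
    then show ?thesis by (simp only: sum_Fdot_eq_0)
  qed
  then obtain c where "\<And>u. u \<in> {t0..} \<Longrightarrow> (\<Sum>k\<in>UNIV. fst (z u) $ k) = c"
    by (rule has_vector_derivative_zero_constant[rotated]) auto
  moreover have "z t0 = z0"
    using sol by (simp add: nonauton_sol_def)
  ultimately show ?thesis
    using \<open>fst z0 \<in> Hyp\<close> \<open>t0 \<le> s\<close> by (force simp: Hyp_def)
qed

lemma nonauton_sol_norm_fst_le:
  fixes ot :: "real \<Rightarrow> real^'k" and \<mu>s :: "real^'m^'k"
  assumes pi: "\<And>F \<mu> t. t0 \<le> t \<Longrightarrow> \<pi> (F, \<mu>, ot t) \<in> Peps 0"
    and sol: "nonauton_sol \<pi> \<mu>s ot t0 z0 z" and hyp: "fst z0 \<in> Hyp" and "t0 \<le> t"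
  shows "norm (fst (z t)) \<le> norm (fst z0)"
proof -
  have "fst (z s) \<bullet> Fdot \<pi> (fst (z s)) (snd (z s)) (ot s) \<le> - 0 * (norm (fst (z s)))\<^sup>2"
    if "t0 \<le> s" for s
  proof -
    have "fst (z s) \<bullet> Fdot \<pi> (fst (z s)) (snd (z s)) (ot s)
        \<le> - exp (- 2 * norm (fst (z s))) * (norm (fst (z s)))\<^sup>2"
      using pi nonauton_sol_in_Hyp[OF sol hyp] that by (intro inner_Fdot_le) auto
    then show ?thesis by (simp add: order_trans)
  qed
  from norm_exp_decay_of_inner_deriv_le[OF nonauton_sol_has_vector_derivative(1)[OF sol] this \<open>t0 \<le> t\<close>]
  show ?thesis
    using sol by (simp add: nonauton_sol_def)
qed

lemma nonauton_sol_exp_decay: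
  fixes ot :: "real \<Rightarrow> real^'k" and \<mu>s :: "real^'m^'k"
  assumes pi: "\<And>F \<mu> t. t0 \<le> t \<Longrightarrow> \<pi> (F, \<mu>, ot t) \<in> Peps 0"
    and sol: "nonauton_sol \<pi> \<mu>s ot t0 z0 z"
    and "fst z0 \<in> Hyp" and "norm (fst z0) \<le> r" and "t0 \<le> t"
  shows "zdist \<mu>s (z t) \<le> zdist \<mu>s z0 * exp (- exp (- 2 * r) * (t - t0))"
proof -
  define F where "F s = fst (z s)" for s
  define M where "M s = snd (z s)" for s
  have z0: "z t0 = z0"
    using sol by (simp add: nonauton_sol_def)
  note dF = nonauton_sol_has_vector_derivative(1)[OF sol, folded F_def M_def]
  note dM = nonauton_sol_has_vector_derivative(2)[OF sol, folded F_def M_def]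
  have F_inner: "F s \<bullet> Fdot \<pi> (F s) (M s) (ot s) \<le> - exp (- 2 * norm (F s)) * (norm (F s))\<^sup>2"
    if "t0 \<le> s" for s
    unfolding F_def using pi nonauton_sol_in_Hyp[OF sol] \<open>fst z0 \<in> Hyp\<close> that
    by (intro inner_Fdot_le) auto
  have M_inner: "(M s - \<mu>s) \<bullet> mudot \<pi> \<mu>s (F s) (M s) (ot s) \<le> - exp (- 2 * norm (F s)) * (norm (M s - \<mu>s))\<^sup>2"
    if "t0 \<le> s" for s
    by (rule inner_mudot_le) (use pi that in auto)
  have rate: "- exp (- 2 * norm (F s)) * x \<le> - exp (- 2 * r) * x" if "t0 \<le> s" "0 \<le> x" for s x
    using nonauton_sol_norm_fst_le[OF pi sol \<open>fst z0 \<in> Hyp\<close> that(1)] \<open>norm (fst z0) \<le> r\<close> that(2)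
    by (simp add: F_def mult_right_mono)
  have "F s \<bullet> Fdot \<pi> (F s) (M s) (ot s) \<le> - exp (- 2 * r) * (norm (F s))\<^sup>2" if "t0 \<le> s" for s
    using F_inner[OF that] rate[OF that zero_le_power2] by (rule order_trans)
  then have "norm (F t) \<le> norm (F t0) * exp (- exp (- 2 * r) * (t - t0))"
    using dF \<open>t0 \<le> t\<close> by (intro norm_exp_decay_of_inner_deriv_le)
  moreover have "(M s - \<mu>s) \<bullet> mudot \<pi> \<mu>s (F s) (M s) (ot s) \<le> - exp (- 2 * r) * (norm (M s - \<mu>s))\<^sup>2"
    if "t0 \<le> s" for s
    using M_inner[OF that] rate[OF that zero_le_power2] by (rule order_trans)
  then have "norm (M t - \<mu>s) \<le> norm (M t0 - \<mu>s) * exp (- exp (- 2 * r) * (t - t0))"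
    using dM \<open>t0 \<le> t\<close> by (intro norm_exp_decay_of_inner_deriv_le)
  ultimately show ?thesis
    using z0 by (simp add: zdist_def F_def M_def distrib_right)
qed

lemma mult_exp_decay_lt:
  fixes d \<rho> \<eta> c s :: real
  assumes "0 \<le> d" "d < \<rho>" "0 < \<eta>" "0 < c" "\<bar>ln (\<rho> / \<eta>)\<bar> / c \<le> s"
  shows "d * exp (- c * s) < \<eta>"
proof -
  have "- c * s \<le> - \<bar>ln (\<rho> / \<eta>)\<bar>"
    using assms(4,5) by (simp add: field_simps)
  also have "\<dots> \<le> ln (\<eta> / \<rho>)"
    using assms by (simp add: ln_div)
  finally have "exp (- c * s) \<le> \<eta> / \<rho>"
    using assms by (metis exp_le_cancel_iff exp_ln divide_pos_pos le_less_trans)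
  then have "d * exp (- c * s) \<le> d * (\<eta> / \<rho>)"
    using assms(1) by (rule mult_left_mono)
  also have "\<dots> < \<rho> * (\<eta> / \<rho>)"
    using assms by (intro mult_strict_right_mono) auto
  finally show ?thesis
    using assms by simp
qed

lemma nonauton_sol_stable:
  fixes ot :: "real \<Rightarrow> real^'k" and \<mu>s :: "real^'m^'k"
  assumes "nonauton_sol \<pi> \<mu>s ot t0 z0 z"
    and "\<And>F \<mu> t. t0 \<le> t \<Longrightarrow> \<pi> (F, \<mu>, ot t) \<in> Peps 0" and "fst z0 \<in> Hyp" and "t0 \<le> t"
  shows "zdist \<mu>s (z t) \<le> zdist \<mu>s z0"
proof -
  have "zdist \<mu>s (z t) \<le> zdist \<mu>s z0 * exp (- exp (- 2 * norm (fst z0)) * (t - t0))"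
    using assms by (intro nonauton_sol_exp_decay) auto
  also have "\<dots> \<le> zdist \<mu>s z0"
    using \<open>t0 \<le> t\<close> by (intro mult_left_le) (auto simp: zdist_def)
  finally show ?thesis .
qed

lemma nonauton_sol_attractive:
  fixes ot :: "real \<Rightarrow> real^'k" and \<mu>s :: "real^'m^'k"
  assumes "nonauton_sol \<pi> \<mu>s ot t0 z0 z"
    and "\<And>F \<mu> t. t0 \<le> t \<Longrightarrow> \<pi> (F, \<mu>, ot t) \<in> Peps 0" and "fst z0 \<in> Hyp"
    and "zdist \<mu>s z0 < \<rho>" and "0 < \<eta>" and "t0 + \<bar>ln (\<rho> / \<eta>)\<bar> / exp (- 2 * \<rho>) \<le> t"
  shows "zdist \<mu>s (z t) < \<eta>"
proof -
  have "0 \<le> \<bar>ln (\<rho> / \<eta>)\<bar> / exp (- 2 * \<rho>)"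
    by simp
  then have "t0 \<le> t"
    using assms(6) by linarith
  moreover have "norm (fst z0) \<le> \<rho>"
    using \<open>zdist \<mu>s z0 < \<rho>\<close> norm_ge_zero[of "snd z0 - \<mu>s"] unfolding zdist_def by linarith
  ultimately have "zdist \<mu>s (z t) \<le> zdist \<mu>s z0 * exp (- exp (- 2 * \<rho>) * (t - t0))"
    using assms by (intro nonauton_sol_exp_decay) auto
  also have "\<dots> < \<eta>"
    using assms by (intro mult_exp_decay_lt) (auto simp: zdist_def)
  finally show ?thesis .
qed

lemma auton_sol_pi_in_Peps_0:
  assumes "0 \<le> \<epsilon>" and "\<forall>th\<in>Theta \<epsilon>. \<pi> th \<in> Peps \<epsilon>"
    and "auton_sol \<epsilon> \<pi> \<gamma> \<mu>s th0 th" and "0 \<le> t"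
  shows "\<pi> (F, \<mu>, snd (snd (th t))) \<in> Peps 0"
proof -
  have "th t \<in> Theta \<epsilon>"
    using assms(3,4) by (simp add: auton_sol_def)
  then have "(F, \<mu>, snd (snd (th t))) \<in> Theta \<epsilon>"
    by (simp add: Theta_def mem_Times_iff)
  then show ?thesis
    using assms(1,2) Peps_subset_Peps_0 by blast
qed

theorem proposition1:
  fixes \<pi> :: "(real^'k) \<times> (real^'m^'k) \<times> (real^'k) \<Rightarrow> real^'k"
    and \<gamma> :: "real^'m^'k \<Rightarrow> real^'k"
    and \<mu>s :: "real^'m^'k"
    and \<epsilon> :: real
  assumes K2: "CARD('k) \<ge> 2"
    and eps: "\<epsilon> > 0"
    and pi_range: "\<forall>th\<in>Theta \<epsilon>. \<pi> th \<in> Peps \<epsilon>"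
    and gamma_range: "\<forall>\<mu>. \<gamma> \<mu> \<in> Peps \<epsilon>"
    and pi_C1: "C1_on (Theta \<epsilon>) \<pi>"
    and gamma_C1: "C1_on UNIV \<gamma>"
  shows
    "(\<forall>ov\<in>Oeps \<epsilon>. Fdot \<pi> 0 \<mu>s ov = 0 \<and> mudot \<pi> \<mu>s 0 \<mu>s ov = 0)
     \<and> (\<forall>\<eta>>0. \<exists>\<delta>>0. \<forall>th0 th t0 z0 z.
           th0 \<in> Theta \<epsilon> \<and> fst th0 \<in> Hyp \<and> auton_sol \<epsilon> \<pi> \<gamma> \<mu>s th0 th \<and>
           t0 \<ge> 0 \<and> fst z0 \<in> Hyp \<and> zdist \<mu>s z0 < \<delta> \<and>
           nonauton_sol \<pi> \<mu>s (\<lambda>t. snd (snd (th t))) t0 z0 z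
           \<longrightarrow> (\<forall>t\<ge>t0. zdist \<mu>s (z t) < \<eta>))
     \<and> (\<forall>\<eta>>0. \<forall>\<rho>>0. \<exists>T. \<forall>th0 th t0 z0 z.
           th0 \<in> Theta \<epsilon> \<and> fst th0 \<in> Hyp \<and> auton_sol \<epsilon> \<pi> \<gamma> \<mu>s th0 th \<and>
           t0 \<ge> 0 \<and> fst z0 \<in> Hyp \<and> zdist \<mu>s z0 < \<rho> \<and>
           nonauton_sol \<pi> \<mu>s (\<lambda>t. snd (snd (th t))) t0 z0 z
           \<longrightarrow> (\<forall>t\<ge>t0 + T. zdist \<mu>s (z t) < \<eta>))"
proof -
  \<comment> \<open>\<open>K \<ge> 2\<close>, the range of \<open>\<gamma>\<close> and the \<open>C\<^sup>1\<close> hypotheses are unused: the solutions are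
    given, and only \<open>\<pi> \<in> Peps \<epsilon>\<close> enters the estimates.\<close>
  have pi: "\<pi> (F, \<mu>, snd (snd (th t))) \<in> Peps 0"
    if "auton_sol \<epsilon> \<pi> \<gamma> \<mu>s th0 th" "0 \<le> t" for th0 th t F \<mu>
    using eps pi_range that by (intro auton_sol_pi_in_Peps_0) auto
  show ?thesis
    apply (intro conjI allI impI)
    subgoal by (simp add: Fdot_def mudot_def wgt_def vec_eq_iff)
    subgoal for \<eta>
      by (intro exI[of _ \<eta>] conjI allI impI)
        (auto intro!: le_less_trans[OF nonauton_sol_stable] pi)
    subgoal for \<eta> \<rho>
      by (intro exI[of _ "\<bar>ln (\<rho> / \<eta>)\<bar> / exp (- 2 * \<rho>)"] allI impI)
        (auto intro!: nonauton_sol_attractive pi)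
    done
qed

end
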